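(* Fix an integer $M\ge 1$ and a real $\delta>0$. Then there is $T_0$ such that for every integer $T\ge T_0$, with $n=\left\lceil (1+\delta)\,\mathrm{e}\ln 2\,(M+1)^2\log_2 T\right\rceil$, there exists a code $(\mathbf{c}_1,\dots,\mathbf{c}_T)$ of $T$ binary words of length $n$ satisfying both of the following: (I) (identification) for every $t\in\{1,\dots,T\}$, every set $S\subseteq\{1,\dots,T\}\setminus\{t\}$ with $|S|\le M$, and every choice of shifts $s_u\in\{0,1,\dots,n-1\}$ ($u\in S$), the vector $\bigvee_{u\in S}\sigma_{s_u}(\mathbf{c}_u)$ does not cover $\mathbf{c}_t$; (S) (synchronization) for every $t\in\{1,\dots,T\}$, every $d\in\{1,\dots,n-1\}$, every set $S\subseteq\{1,\dots,T\}\setminus\{t\}$ with $|S|\le M-1$, and every choice of shifts $s_u\in\{0,1,\dots,n-1\}$ ($u\in S$), the vector $\sigma_d(\mathbf{c}_t)\vee\bigvee_{u\in S}\sigma_{s_u}(\mathbf{c}_u)$ does not cover $\mathbf{c}_t$. In other words, the minimum length $n_{\mathrm{asyn}}(T,M)$ of a code for asynchronous signature coding over the OR channel satisfies $n_{\mathrm{asyn}}(T,M)\lesssim \mathrm{e}\ln 2\,(M+1)^2\log_2 T$ as $T\to\infty$ with $M$ fixed.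
   Context: Binary vectors are elements of $\{0,1\}^n$; $\vee$ denotes the componentwise Boolean OR (an empty OR is the all-zero vector). A vector $\mathbf{y}=(y_1,\dots,y_n)$ covers $\mathbf{z}=(z_1,\dots,z_n)$ if $y_i\ge z_i$ for all $i$. For $\mathbf{c}\in\{0,1\}^n$ and an integer $s\in\{0,\dots,n-1\}$, the shifted vector $\sigma_s(\mathbf{c})\in\{0,1\}^n$ is defined by $(\sigma_s(\mathbf{c}))_i=c_{i-s}$ if $i>s$ and $(\sigma_s(\mathbf{c}))_i=0$ if $i\le s$. Logarithm $\log$ is base 2, $\ln$ is natural. *)

theory Defs
  imports "HOL-Analysis.Analysis"
begin

(* Binary vectors of length n are modelled as functions nat => bool, where only
   the coordinates 1..n are relevant (True = 1). *)

definition shiftv :: "nat \<Rightarrow> (nat \<Rightarrow> bool) \<Rightarrow> (nat \<Rightarrow> bool)" where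
  "shiftv s c = (\<lambda>i. s < i \<and> c (i - s))"

definition bigor :: "'a set \<Rightarrow> ('a \<Rightarrow> (nat \<Rightarrow> bool)) \<Rightarrow> (nat \<Rightarrow> bool)" where
  "bigor S f = (\<lambda>i. \<exists>u\<in>S. f u i)"

definition orv :: "(nat \<Rightarrow> bool) \<Rightarrow> (nat \<Rightarrow> bool) \<Rightarrow> (nat \<Rightarrow> bool)" where
  "orv y z = (\<lambda>i. y i \<or> z i)"

definition covers :: "nat \<Rightarrow> (nat \<Rightarrow> bool) \<Rightarrow> (nat \<Rightarrow> bool) \<Rightarrow> bool" where
  "covers n y z \<longleftrightarrow> (\<forall>i\<in>{1..n}. z i \<longrightarrow> y i)"

end

theory Submission
  imports Defs "HOL-Real_Asymp.Real_Asymp"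
begin

text \<open>
  Random coding. Let all bits of all words be independent Bernoulli(p) variables with
  p = 1/(M+1), and fix a word t, interferers S with shifts s and a self-shift d (d = 0 for
  identification). A one of c_t escapes the at most M interferers with probability at least
  x = p (1-p)^M \<ge> 1/(e (M+1)), so scanning c_t from left to right shows that c_t is covered
  with probability at most (1-x)^n. For d > 0 the earlier bits of c_t are reused by its own
  shifted copy, which destroys this independence; but a potential giving every one of c_t in
  the last d positions the weight \<theta> = 1/(1 - p (1-p)^(M-1)) (only M-1 interferers remain)
  still shrinks by the factor 1-x per position in expectation. A union bound over the at most
  (M+1) T^(M+1) n^(M+1) events then leaves room for a good code as soon as
  n \<ge> (1+\<delta>) e (M+1)^2 ln T and T is large.
\<close>

section \<open>Independent Bernoulli bits\<close>

definition bernoulli_weight :: "real \<Rightarrow> bool \<Rightarrow> real" where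
  "bernoulli_weight p b = (if b then p else 1 - p)"

(* Expectation of F over independent Bernoulli(p) bits c a, a \<in> X. Outside X the argument c
   is undefined, so F should only inspect X. *)
definition bernoulli_expect :: "real \<Rightarrow> 'a set \<Rightarrow> (('a \<Rightarrow> bool) \<Rightarrow> real) \<Rightarrow> real" where
  "bernoulli_expect p X F = (\<Sum>c\<in>PiE X (\<lambda>_. UNIV). (\<Prod>a\<in>X. bernoulli_weight p (c a)) * F c)"

lemma bernoulli_expect_empty: "bernoulli_expect p {} F = F (\<lambda>_. undefined)"
  by (simp add: bernoulli_expect_def)

lemma bernoulli_expect_insert:
  assumes "finite X" "a \<notin> X"
  shows "bernoulli_expect p (insert a X) F =
    bernoulli_expect p X (\<lambda>c. (1 - p) * F (c(a := False)) + p * F (c(a := True)))"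
proof -
  let ?upd = "\<lambda>(b, c). c(a := b)"
  have inj: "inj_on ?upd (UNIV \<times> PiE X (\<lambda>_. UNIV))"
    using inj_combinator[OF assms(2), of "\<lambda>_. UNIV"] by simp
  have weight: "(\<Prod>z\<in>insert a X. bernoulli_weight p ((c(a := b)) z)) =
      bernoulli_weight p b * (\<Prod>z\<in>X. bernoulli_weight p (c z))" for b c
    using assms by (subst prod.insert) (auto intro!: prod.cong)
  have "bernoulli_expect p (insert a X) F = (\<Sum>(b, c)\<in>UNIV \<times> PiE X (\<lambda>_. UNIV).
      (\<Prod>z\<in>insert a X. bernoulli_weight p ((c(a := b)) z)) * F (c(a := b)))"
    unfolding bernoulli_expect_def PiE_insert_eq
    by (subst sum.reindex[OF inj]) (simp add: case_prod_beta)
  also have "\<dots> = (\<Sum>b\<in>UNIV. \<Sum>c\<in>PiE X (\<lambda>_. UNIV).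
      bernoulli_weight p b * (\<Prod>z\<in>X. bernoulli_weight p (c z)) * F (c(a := b)))"
    unfolding sum.cartesian_product by (intro sum.cong refl) (auto simp del: fun_upd_apply simp: weight)
  also have "\<dots> = bernoulli_expect p X (\<lambda>c. (1 - p) * F (c(a := False)) + p * F (c(a := True)))"
    unfolding bernoulli_expect_def UNIV_bool
    by (simp add: flip: sum.distrib) (intro sum.cong refl, simp add: algebra_simps bernoulli_weight_def)
  finally show ?thesis .
qed

lemma bernoulli_expect_cong:
  assumes "\<And>c. c \<in> PiE X (\<lambda>_. UNIV) \<Longrightarrow> F c = G c"
  shows "bernoulli_expect p X F = bernoulli_expect p X G"
  unfolding bernoulli_expect_def using assms by (intro sum.cong) auto

lemma bernoulli_expect_mono:
  assumes "0 \<le> p" "p \<le> 1" "\<And>c. c \<in> PiE X (\<lambda>_. UNIV) \<Longrightarrow> F c \<le> G c"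
  shows "bernoulli_expect p X F \<le> bernoulli_expect p X G"
  unfolding bernoulli_expect_def using assms
  by (intro sum_mono mult_left_mono prod_nonneg) (auto simp: bernoulli_weight_def)

lemma bernoulli_expect_cmult: "bernoulli_expect p X (\<lambda>c. a * F c) = a * bernoulli_expect p X F"
  unfolding bernoulli_expect_def by (simp add: sum_distrib_left algebra_simps)

lemma bernoulli_expect_add:
  "bernoulli_expect p X (\<lambda>c. F c + G c) = bernoulli_expect p X F + bernoulli_expect p X G"
  unfolding bernoulli_expect_def by (simp add: sum.distrib algebra_simps)

lemma bernoulli_expect_sum:
  "bernoulli_expect p X (\<lambda>c. \<Sum>e\<in>E. F e c) = (\<Sum>e\<in>E. bernoulli_expect p X (F e))"
  unfolding bernoulli_expect_def by (simp add: sum_distrib_left sum.swap[of _ E])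

lemma bernoulli_expect_const:
  assumes "finite X"
  shows "bernoulli_expect p X (\<lambda>_. a) = a"
  using assms by (induction X rule: finite_induct) (simp_all add: bernoulli_expect_empty
      bernoulli_expect_insert algebra_simps)

lemma bernoulli_expect_union:
  assumes "finite R" "finite Y" "R \<inter> Y = {}"
  shows "bernoulli_expect p (R \<union> Y) F =
    bernoulli_expect p R (\<lambda>r. bernoulli_expect p Y (\<lambda>y. F (override_on r y Y)))"
  using assms(2,3)
proof (induction Y arbitrary: F rule: finite_induct)
  case empty
  then show ?case by (simp add: bernoulli_expect_empty)
next
  case (insert a Y)
  have upd: "override_on r (y(a := b)) (insert a Y) = (override_on r y Y)(a := b)" for r y b
    by (auto simp: override_on_def)
  have "bernoulli_expect p (R \<union> insert a Y) F = bernoulli_expect p (insert a (R \<union> Y)) F"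
    by simp
  also have "\<dots> = bernoulli_expect p (R \<union> Y) (\<lambda>c. (1 - p) * F (c(a := False)) + p * F (c(a := True)))"
    using insert assms(1) by (intro bernoulli_expect_insert) auto
  also have "\<dots> = bernoulli_expect p R (\<lambda>r. bernoulli_expect p Y (\<lambda>y.
      (1 - p) * F ((override_on r y Y)(a := False)) + p * F ((override_on r y Y)(a := True))))"
    using insert by (intro insert.IH) auto
  also have "\<dots> = bernoulli_expect p R (\<lambda>r. bernoulli_expect p (insert a Y) (\<lambda>y. F (override_on r y (insert a Y))))"
    using insert by (simp add: bernoulli_expect_insert upd)
  finally show ?case .
qed

lemma bernoulli_expect_union_irrelevant:
  assumes "finite R" "finite Y" "R \<inter> Y = {}"
    and "\<And>c c'. (\<And>z. z \<notin> Y \<Longrightarrow> c z = c' z) \<Longrightarrow> F c = F c'"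
  shows "bernoulli_expect p (R \<union> Y) F = bernoulli_expect p R F"
proof -
  have "bernoulli_expect p (R \<union> Y) F = bernoulli_expect p R (\<lambda>r. bernoulli_expect p Y (\<lambda>y. F (override_on r y Y)))"
    by (rule bernoulli_expect_union[OF assms(1-3)])
  also have "\<dots> = bernoulli_expect p R (\<lambda>r. bernoulli_expect p Y (\<lambda>_. F r))"
    by (intro bernoulli_expect_cong arg_cong[where f = "bernoulli_expect p Y"] ext assms(4))
      (simp add: override_on_def)
  also have "\<dots> = bernoulli_expect p R F"
    using assms(2) by (simp add: bernoulli_expect_const)
  finally show ?thesis .
qed

lemma bernoulli_expect_indicator_ex:
  assumes "finite A" "inj_on g A"
  shows "bernoulli_expect p (g ` A) (\<lambda>c. if \<exists>u\<in>A. c (g u) then 1 else 0) = 1 - (1 - p) ^ card A"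
  using assms
proof (induction A rule: finite_induct)
  case empty
  then show ?case by (simp add: bernoulli_expect_empty)
next
  case (insert a A)
  then have ga: "g a \<notin> g ` A" and inj: "inj_on g A"
    by (auto simp: inj_on_def)
  have "bernoulli_expect p (g ` insert a A) (\<lambda>c. if \<exists>u\<in>insert a A. c (g u) then 1 else 0)
     = bernoulli_expect p (g ` A) (\<lambda>c. (1 - p) * (if \<exists>u\<in>A. c (g u) then 1 else 0) + p)"
    using insert ga by (simp add: bernoulli_expect_insert) (intro bernoulli_expect_cong, auto, metis image_eqI)
  also have "\<dots> = (1 - p) * (1 - (1 - p) ^ card A) + p"
    using insert inj by (simp add: bernoulli_expect_add bernoulli_expect_cmult bernoulli_expect_const)
  also have "\<dots> = 1 - (1 - p) ^ card (insert a A)"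
    using insert by (simp add: algebra_simps)
  finally show ?case .
qed

lemma bernoulli_expect_new_position:
  assumes "finite A" "inj_on g A" "a \<notin> g ` A"
  shows "bernoulli_expect p (insert a (g ` A))
      (\<lambda>y. if y a then (if D \<or> (\<exists>u\<in>A. y (g u)) then \<theta> else 0) else 1)
    = (1 - p) + p * \<theta> * (if D then 1 else 1 - (1 - p) ^ card A)"
proof -
  have "bernoulli_expect p (insert a (g ` A))
      (\<lambda>y. if y a then (if D \<or> (\<exists>u\<in>A. y (g u)) then \<theta> else 0) else 1)
    = bernoulli_expect p (g ` A)
      (\<lambda>y. (1 - p) + p * \<theta> * (if D then 1 else if \<exists>u\<in>A. y (g u) then 1 else 0))"
    using assms by (simp add: bernoulli_expect_insert) (intro bernoulli_expect_cong, auto)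
  also have "\<dots> = (1 - p) + p * \<theta> * (if D then 1 else 1 - (1 - p) ^ card A)"
    using assms by (simp add: bernoulli_expect_add bernoulli_expect_cmult bernoulli_expect_const
        bernoulli_expect_indicator_ex)
  finally show ?thesis .
qed

lemma bernoulli_expect_exists_avoiding:
  assumes "finite X" "finite E" "0 \<le> p" "p \<le> 1"
    and bound: "\<And>e. e \<in> E \<Longrightarrow> bernoulli_expect p X (\<lambda>c. if B e c then 1 else 0) \<le> b"
    and small: "real (card E) * b < 1"
  shows "\<exists>c. \<forall>e\<in>E. \<not> B e c"
proof (rule ccontr)
  assume none: "\<nexists>c. \<forall>e\<in>E. \<not> B e c"
  have hit: "1 \<le> (\<Sum>e\<in>E. if B e c then 1 else 0 :: real)" for c
  proof -
    obtain e where "e \<in> E" "B e c"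
      using none by blast
    then have "(if B e c then 1 else 0 :: real) \<le> (\<Sum>e\<in>E. if B e c then 1 else 0)"
      using assms(2) by (intro member_le_sum) auto
    with \<open>B e c\<close> show ?thesis
      by simp
  qed
  have "1 = bernoulli_expect p X (\<lambda>_. 1)"
    using assms(1) by (simp add: bernoulli_expect_const)
  also have "\<dots> \<le> bernoulli_expect p X (\<lambda>c. \<Sum>e\<in>E. if B e c then 1 else 0)"
    using hit assms(3,4) by (intro bernoulli_expect_mono) auto
  also have "\<dots> = (\<Sum>e\<in>E. bernoulli_expect p X (\<lambda>c. if B e c then 1 else 0))"
    by (rule bernoulli_expect_sum)
  also have "\<dots> \<le> real (card E) * b"
    using bound by (simp add: sum_bounded_above)
  finally show False
    using small by simp
qed

section \<open>Covering events and their potential\<close>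

(* A code is c :: nat \<times> nat \<Rightarrow> bool, c (u, i) being bit i of word u. The self-shift d = 0
   encodes the identification condition, in which no shifted copy of word t takes part. *)
definition covered_by_shifts :: "nat set \<Rightarrow> (nat \<Rightarrow> nat) \<Rightarrow> nat \<Rightarrow> (nat \<times> nat \<Rightarrow> bool) \<Rightarrow> bool" where
  "covered_by_shifts S s i c \<longleftrightarrow> (\<exists>u\<in>S. s u < i \<and> c (u, i - s u))"

definition covered_by_self :: "nat \<Rightarrow> nat \<Rightarrow> nat \<Rightarrow> (nat \<times> nat \<Rightarrow> bool) \<Rightarrow> bool" where
  "covered_by_self t d i c \<longleftrightarrow> 0 < d \<and> d < i \<and> c (t, i - d)"

definition covered_upto ::
    "nat \<Rightarrow> nat set \<Rightarrow> (nat \<Rightarrow> nat) \<Rightarrow> nat \<Rightarrow> nat \<Rightarrow> (nat \<times> nat \<Rightarrow> bool) \<Rightarrow> bool" where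
  "covered_upto t S s d m c \<longleftrightarrow>
    (\<forall>i\<in>{1..m}. c (t, i) \<longrightarrow> covered_by_self t d i c \<or> covered_by_shifts S s i c)"

definition frontier :: "nat \<Rightarrow> nat \<Rightarrow> nat set" where
  "frontier d m = {j\<in>{1..m}. m < j + d}"

definition frontier_weight :: "real \<Rightarrow> nat \<Rightarrow> nat set \<Rightarrow> (nat \<times> nat \<Rightarrow> bool) \<Rightarrow> real" where
  "frontier_weight \<theta> t J c = (\<Prod>j\<in>J. if c (t, j) then \<theta> else 1)"

(* A one of word t at a frontier position j will cover position j + d later on; the weight
   \<theta> > 1 pays for this in advance, which makes the expected potential drop by a fixed
   factor at every position. *)
definition potential ::
    "real \<Rightarrow> nat \<Rightarrow> nat set \<Rightarrow> (nat \<Rightarrow> nat) \<Rightarrow> nat \<Rightarrow> nat \<Rightarrow> (nat \<times> nat \<Rightarrow> bool) \<Rightarrow> real" where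
  "potential \<theta> t S s d m c =
    (if covered_upto t S s d m c then 1 else 0) * frontier_weight \<theta> t (frontier d m) c"

(* The bits inspected for the first time at position Suc m. *)
definition new_bits :: "nat \<Rightarrow> nat set \<Rightarrow> (nat \<Rightarrow> nat) \<Rightarrow> nat \<Rightarrow> (nat \<times> nat) set" where
  "new_bits t S s m = insert (t, Suc m) ((\<lambda>u. (u, Suc m - s u)) ` {u\<in>S. s u \<le> m})"

lemma covered_upto_0 [simp]: "covered_upto t S s d 0 c"
  by (simp add: covered_upto_def)

lemma covered_upto_Suc:
  "covered_upto t S s d (Suc m) c \<longleftrightarrow> covered_upto t S s d m c \<and>
    (c (t, Suc m) \<longrightarrow> covered_by_self t d (Suc m) c \<or> covered_by_shifts S s (Suc m) c)"
  unfolding covered_upto_def using atLeastAtMostSuc_conv[of 1 m] by auto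

lemma covered_upto_restrict: "covered_upto t S (restrict s S) d m c = covered_upto t S s d m c"
  unfolding covered_upto_def covered_by_shifts_def by auto

lemma covers_iff_covered_upto:
  "covers n (bigor S (\<lambda>u. shiftv (s u) (\<lambda>i. c (u, i)))) (\<lambda>i. c (t, i)) \<longleftrightarrow> covered_upto t S s 0 n c"
  unfolding covers_def bigor_def shiftv_def covered_upto_def covered_by_self_def covered_by_shifts_def
  by auto

lemma covers_shift_iff_covered_upto:
  assumes "0 < d"
  shows "covers n (orv (shiftv d (\<lambda>i. c (t, i))) (bigor S (\<lambda>u. shiftv (s u) (\<lambda>i. c (u, i)))))
      (\<lambda>i. c (t, i)) \<longleftrightarrow> covered_upto t S s d n c"
  using assms unfolding covers_def orv_def bigor_def shiftv_def covered_upto_def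
    covered_by_self_def covered_by_shifts_def by auto

lemma covered_upto_cong:
  assumes "\<And>j. j \<le> m \<Longrightarrow> c (t, j) = c' (t, j)"
    and "\<And>u j. u \<in> S \<Longrightarrow> s u < j \<Longrightarrow> j \<le> m \<Longrightarrow> c (u, j - s u) = c' (u, j - s u)"
  shows "covered_upto t S s d m c = covered_upto t S s d m c'"
proof -
  have "covered_by_self t d i c = covered_by_self t d i c'" if "i \<le> m" for i
    using assms(1) that unfolding covered_by_self_def by auto
  moreover have "covered_by_shifts S s i c = covered_by_shifts S s i c'" if "i \<le> m" for i
    using assms(2) that unfolding covered_by_shifts_def by auto
  ultimately show ?thesis
    using assms(1) unfolding covered_upto_def by auto
qed

lemma potential_cong:
  assumes "\<And>j. j \<le> m \<Longrightarrow> c (t, j) = c' (t, j)"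
    and "\<And>u j. u \<in> S \<Longrightarrow> s u < j \<Longrightarrow> j \<le> m \<Longrightarrow> c (u, j - s u) = c' (u, j - s u)"
  shows "potential \<theta> t S s d m c = potential \<theta> t S s d m c'"
proof -
  have "covered_upto t S s d m c = covered_upto t S s d m c'"
    by (rule covered_upto_cong) (use assms in auto)
  moreover have "frontier_weight \<theta> t (frontier d m) c = frontier_weight \<theta> t (frontier d m) c'"
    using assms(1) by (auto simp: frontier_weight_def frontier_def intro!: prod.cong)
  ultimately show ?thesis
    by (simp add: potential_def)
qed

lemma potential_split_frontier:
  "potential \<theta> t S s d m c = (if covered_upto t S s d m c then 1 else 0) *
    frontier_weight \<theta> t (frontier d (Suc m) - {Suc m}) c *
    (if covered_by_self t d (Suc m) c then \<theta> else 1)"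
proof -
  let ?F = "frontier d (Suc m) - {Suc m}"
  have "frontier d m = (if covered_by_self t d (Suc m) c \<or> 0 < d \<and> d \<le> m then insert (Suc m - d) ?F else ?F)"
    "Suc m - d \<notin> ?F" "finite ?F"
    by (auto simp: frontier_def covered_by_self_def)
  then show ?thesis
    by (auto simp: potential_def frontier_weight_def covered_by_self_def)
qed

lemma frontier_weight_frontier_Suc:
  "frontier_weight \<theta> t (frontier d (Suc m)) c =
    (if 0 < d \<and> c (t, Suc m) then \<theta> else 1) * frontier_weight \<theta> t (frontier d (Suc m) - {Suc m}) c"
proof (cases "0 < d")
  case True
  then have "Suc m \<in> frontier d (Suc m)" "finite (frontier d (Suc m))"
    by (auto simp: frontier_def)
  with True show ?thesis
    by (simp add: frontier_weight_def prod.remove[of _ "Suc m"])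
next
  case False
  then show ?thesis
    by (simp add: frontier_weight_def frontier_def)
qed

lemma notin_new_bits:
  assumes "t \<notin> S" "j \<le> m"
  shows "(t, j) \<notin> new_bits t S s m"
    and "u \<in> S \<Longrightarrow> s u < j \<Longrightarrow> (u, j - s u) \<notin> new_bits t S s m"
  using assms by (auto simp: new_bits_def)

lemma potential_Suc_override_new_bits:
  assumes "t \<notin> S" "d = 0 \<Longrightarrow> \<theta> = 1"
  shows "potential \<theta> t S s d (Suc m) (override_on c y (new_bits t S s m)) =
    (if covered_upto t S s d m c then 1 else 0) * frontier_weight \<theta> t (frontier d (Suc m) - {Suc m}) c *
    (if y (t, Suc m) then
      if covered_by_self t d (Suc m) c \<or> (\<exists>u\<in>{u\<in>S. s u \<le> m}. y (u, Suc m - s u)) then \<theta> else 0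
     else 1)"
proof -
  let ?f = "override_on c y (new_bits t S s m)" and ?F = "frontier d (Suc m) - {Suc m}"
  note old = notin_new_bits[OF assms(1)]
  have "covered_upto t S s d m ?f = covered_upto t S s d m c"
    using old by (intro covered_upto_cong) (auto simp: override_on_def)
  moreover have "?f (t, Suc m) = y (t, Suc m)"
    by (simp add: override_on_def new_bits_def)
  moreover have "covered_by_self t d (Suc m) ?f = covered_by_self t d (Suc m) c"
    using old(1) by (auto simp: covered_by_self_def override_on_def)
  moreover have "covered_by_shifts S s (Suc m) ?f \<longleftrightarrow> (\<exists>u\<in>{u\<in>S. s u \<le> m}. y (u, Suc m - s u))"
    using assms(1) by (auto simp: covered_by_shifts_def override_on_def new_bits_def)
  moreover have "frontier_weight \<theta> t ?F ?f = frontier_weight \<theta> t ?F c"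
    using old(1) by (auto simp: frontier_weight_def frontier_def override_on_def intro!: prod.cong)
  ultimately show ?thesis
    using assms(2) by (auto simp: potential_def covered_upto_Suc frontier_weight_frontier_Suc)
qed

section \<open>The probability of a covering event\<close>

(* self_gain and others_gain are the one-step bounds at a one of word t that is, resp. is not,
   already covered by the shifted copy of word t. *)
context
  fixes p \<theta> x :: real and t d :: nat and S :: "nat set" and s :: "nat \<Rightarrow> nat"
    and X :: "(nat \<times> nat) set"
  assumes finite_X: "finite X" and finite_S: "finite S" and t_notin_S: "t \<notin> S"
    and p_nonneg: "0 \<le> p" and p_le_1: "p \<le> 1" and theta_ge_1: "1 \<le> \<theta>" and x_le_1: "x \<le> 1"
    and theta_if_d0: "d = 0 \<Longrightarrow> \<theta> = 1"
    and self_gain: "0 < d \<Longrightarrow> (1 - p) + p * \<theta> \<le> (1 - x) * \<theta>"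
    and others_gain: "\<And>k. k \<le> card S \<Longrightarrow> (1 - p) + p * \<theta> * (1 - (1 - p) ^ k) \<le> 1 - x"
begin

lemma bernoulli_expect_new_bits_le:
  assumes "D \<Longrightarrow> 0 < d"
  shows "bernoulli_expect p (new_bits t S s m) (\<lambda>y. if y (t, Suc m) then
      if D \<or> (\<exists>u\<in>{u\<in>S. s u \<le> m}. y (u, Suc m - s u)) then \<theta> else 0 else 1)
    \<le> (1 - x) * (if D then \<theta> else 1)"
proof -
  let ?A = "{u\<in>S. s u \<le> m}" and ?g = "\<lambda>u. (u, Suc m - s u)"
  have A: "finite ?A" "inj_on ?g ?A" "(t, Suc m) \<notin> ?g ` ?A" "card ?A \<le> card S"
    using finite_S t_notin_S by (auto simp: inj_on_def intro: card_mono)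
  have "bernoulli_expect p (new_bits t S s m) (\<lambda>y. if y (t, Suc m) then
      if D \<or> (\<exists>u\<in>?A. y (u, Suc m - s u)) then \<theta> else 0 else 1)
    = (1 - p) + p * \<theta> * (if D then 1 else 1 - (1 - p) ^ card ?A)"
    unfolding new_bits_def by (rule bernoulli_expect_new_position[OF A(1-3)])
  then show ?thesis
    using assms self_gain others_gain[OF A(4)] by auto
qed

lemma potential_step:
  assumes t_in_X: "(t, Suc m) \<in> X" and S_in_X: "\<And>u. u \<in> S \<Longrightarrow> s u \<le> m \<Longrightarrow> (u, Suc m - s u) \<in> X"
  shows "bernoulli_expect p X (potential \<theta> t S s d (Suc m))
    \<le> (1 - x) * bernoulli_expect p X (potential \<theta> t S s d m)"
proof -
  let ?Y = "new_bits t S s m"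
  define R where "R = X - ?Y"
  define W where "W c = (if covered_upto t S s d m c then 1 else 0) *
    frontier_weight \<theta> t (frontier d (Suc m) - {Suc m}) c" for c
  define H where "H c = (\<lambda>y. if y (t, Suc m) then
    if covered_by_self t d (Suc m) c \<or> (\<exists>u\<in>{u\<in>S. s u \<le> m}. y (u, Suc m - s u)) then \<theta> else 0 else 1)" for c
  have X_split: "X = R \<union> ?Y" "R \<inter> ?Y = {}" "finite R" "finite ?Y"
    using t_in_X S_in_X finite_X finite_S by (auto simp: R_def new_bits_def intro: finite_subset)
  have W_nonneg: "0 \<le> W c" for c
    using theta_ge_1 unfolding W_def frontier_weight_def by (intro mult_nonneg_nonneg prod_nonneg) auto
  have "bernoulli_expect p X (potential \<theta> t S s d (Suc m)) =
      bernoulli_expect p R (\<lambda>r. bernoulli_expect p ?Y (\<lambda>y. W r * H r y))"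
  proof -
    have "potential \<theta> t S s d (Suc m) (override_on r y ?Y) = W r * H r y" for r y
      unfolding W_def H_def by (rule potential_Suc_override_new_bits[OF t_notin_S theta_if_d0])
    then show ?thesis
      unfolding X_split(1) bernoulli_expect_union[OF X_split(3,4,2)] by simp
  qed
  also have "\<dots> = bernoulli_expect p R (\<lambda>r. W r * bernoulli_expect p ?Y (H r))"
    by (simp only: bernoulli_expect_cmult)
  also have "\<dots> \<le> bernoulli_expect p R (\<lambda>r. W r * ((1 - x) * (if covered_by_self t d (Suc m) r then \<theta> else 1)))"
    unfolding H_def
    by (intro bernoulli_expect_mono p_nonneg p_le_1 mult_left_mono W_nonneg bernoulli_expect_new_bits_le)
      (simp add: covered_by_self_def)
  also have "\<dots> = (1 - x) * bernoulli_expect p R (potential \<theta> t S s d m)"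
    by (simp add: W_def potential_split_frontier mult_ac flip: bernoulli_expect_cmult)
  also have "bernoulli_expect p R (potential \<theta> t S s d m) = bernoulli_expect p X (potential \<theta> t S s d m)"
    unfolding X_split(1)
    by (rule bernoulli_expect_union_irrelevant[OF X_split(3,4,2), symmetric])
      (intro potential_cong; simp add: notin_new_bits[OF t_notin_S])
  finally show ?thesis .
qed

lemma bernoulli_expect_covered_upto_le:
  assumes t_in_X: "\<And>i. i \<in> {1..n} \<Longrightarrow> (t, i) \<in> X"
    and S_in_X: "\<And>u i. u \<in> S \<Longrightarrow> i \<in> {1..n} \<Longrightarrow> s u < i \<Longrightarrow> (u, i - s u) \<in> X"
  shows "bernoulli_expect p X (\<lambda>c. if covered_upto t S s d n c then 1 else 0) \<le> (1 - x) ^ n"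
proof -
  have potential_bound: "bernoulli_expect p X (potential \<theta> t S s d m) \<le> (1 - x) ^ m" if "m \<le> n" for m
    using that
  proof (induction m)
    case 0
    have "potential \<theta> t S s d 0 = (\<lambda>_. 1)"
      by (simp add: potential_def frontier_weight_def frontier_def fun_eq_iff)
    then show ?case
      using finite_X by (simp add: bernoulli_expect_const)
  next
    case (Suc m)
    have "bernoulli_expect p X (potential \<theta> t S s d (Suc m))
        \<le> (1 - x) * bernoulli_expect p X (potential \<theta> t S s d m)"
    proof (rule potential_step)
      show "(t, Suc m) \<in> X"
        using Suc.prems by (simp add: t_in_X)
      show "(u, Suc m - s u) \<in> X" if "u \<in> S" "s u \<le> m" for u
        using Suc.prems that by (simp add: S_in_X)
    qed
    also have "\<dots> \<le> (1 - x) * (1 - x) ^ m"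
      using Suc x_le_1 by (intro mult_left_mono) auto
    finally show ?case
      by simp
  qed
  have "bernoulli_expect p X (\<lambda>c. if covered_upto t S s d n c then 1 else 0)
      \<le> bernoulli_expect p X (potential \<theta> t S s d n)"
    using theta_ge_1 by (intro bernoulli_expect_mono p_nonneg p_le_1)
      (auto simp: potential_def frontier_weight_def intro!: prod_ge_1)
  also have "\<dots> \<le> (1 - x) ^ n"
    by (rule potential_bound) simp
  finally show ?thesis .
qed

end

(* q = (1-p)^(M-1) is the probability that M-1 interferers all miss a given position. *)
lemma self_shift_parameters:
  fixes p q :: real
  assumes "0 < p" "p < 1" "0 < q" "q \<le> 1"
  defines "x \<equiv> p * (1 - p) * q" and "\<theta> \<equiv> 1 / (1 - p * q)"
  shows "1 \<le> \<theta>" and "(1 - p) + p * \<theta> = (1 - x) * \<theta>"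
    and "\<And>r. q \<le> r \<Longrightarrow> r \<le> 1 \<Longrightarrow> (1 - p) + p * \<theta> * (1 - r) \<le> 1 - x"
proof -
  have "p * q \<le> p"
    using assms by (simp add: mult_left_le)
  then have pq: "0 < 1 - p * q"
    using assms by linarith
  then show "1 \<le> \<theta>"
    using assms by (simp add: \<theta>_def)
  have "(1 - p) + p * \<theta> = ((1 - p) * (1 - p * q) + p) / (1 - p * q)"
    using pq by (simp add: \<theta>_def field_simps)
  also have "(1 - p) * (1 - p * q) + p = 1 - x"
    by (simp add: x_def algebra_simps)
  finally show "(1 - p) + p * \<theta> = (1 - x) * \<theta>"
    by (simp add: \<theta>_def)
  fix r assume r: "q \<le> r" "r \<le> 1"
  have "(1 - p) + p * \<theta> * (1 - r) = ((1 - p) * (1 - p * q) + p * (1 - r)) / (1 - p * q)"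
    using pq by (simp add: \<theta>_def field_simps)
  also have "\<dots> \<le> 1 - x"
  proof -
    have "p * (1 - r) \<le> p * (1 - q)"
      using r assms by (intro mult_left_mono) auto
    moreover have "0 \<le> (p * q) * (p * q) * (1 - p)"
      using assms by auto
    ultimately have "(1 - p) * (1 - p * q) + p * (1 - r) \<le> (1 - x) * (1 - p * q)"
      by (simp add: x_def algebra_simps)
    then show ?thesis
      using pq by (simp add: divide_le_eq)
  qed
  finally show "(1 - p) + p * \<theta> * (1 - r) \<le> 1 - x" .
qed

lemma covered_upto_probability_le:
  fixes M :: nat
  assumes M: "1 \<le> M" and X: "finite X" "finite S" "t \<notin> S"
    and card_S: "card S \<le> (if d = 0 then M else M - 1)"
    and t_in_X: "\<And>i. i \<in> {1..n} \<Longrightarrow> (t, i) \<in> X"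
    and S_in_X: "\<And>u i. u \<in> S \<Longrightarrow> i \<in> {1..n} \<Longrightarrow> s u < i \<Longrightarrow> (u, i - s u) \<in> X"
  shows "bernoulli_expect (1 / (real M + 1)) X (\<lambda>c. if covered_upto t S s d n c then 1 else 0)
    \<le> (1 - 1 / (real M + 1) * (1 - 1 / (real M + 1)) ^ M) ^ n"
proof -
  define p where "p = 1 / (real M + 1)"
  have p: "0 < p" "p < 1"
    using M by (auto simp: p_def field_simps)
  have x_le_1: "p * (1 - p) ^ M \<le> 1"
    using p by (simp add: mult_le_one power_le_one)
  have pow_le: "(1 - p) ^ j \<le> (1 - p) ^ k" if "k \<le> j" for j k
    using p that by (intro power_decreasing) auto
  have "bernoulli_expect p X (\<lambda>c. if covered_upto t S s d n c then 1 else 0) \<le> (1 - p * (1 - p) ^ M) ^ n"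
  proof (cases "d = 0")
    case True
    have "(1 - p) + p * 1 * (1 - (1 - p) ^ k) \<le> 1 - p * (1 - p) ^ M" if "k \<le> card S" for k
      using pow_le[of k M] that card_S True p by (simp add: algebra_simps)
    with True show ?thesis
      by (intro bernoulli_expect_covered_upto_le[where \<theta> = 1])
        (use X t_in_X S_in_X p x_le_1 in auto)
  next
    case False
    define q where "q = (1 - p) ^ (M - 1)"
    have q: "0 < q" "q \<le> 1"
      using p by (auto simp: q_def power_le_one)
    have x: "p * (1 - p) ^ M = p * (1 - p) * q"
      using M by (simp add: q_def power_eq_if)
    note gains = self_shift_parameters[OF p q, folded x]
    have "(1 - p) + p * (1 / (1 - p * q)) * (1 - (1 - p) ^ k) \<le> 1 - p * (1 - p) ^ M"
      if "k \<le> card S" for k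
      using that card_S False p pow_le[of k "M - 1"] by (intro gains(3)) (auto simp: q_def power_le_one)
    with False show ?thesis
      by (intro bernoulli_expect_covered_upto_le[where \<theta> = "1 / (1 - p * q)"])
        (use X t_in_X S_in_X p x_le_1 gains(1,2) in auto)
  qed
  then show ?thesis
    by (simp add: p_def)
qed

section \<open>The union bound\<close>

definition shift_patterns :: "nat set \<Rightarrow> nat \<Rightarrow> nat \<Rightarrow> (nat set \<times> (nat \<Rightarrow> nat)) set" where
  "shift_patterns A k n = (SIGMA S:{S. S \<subseteq> A \<and> card S \<le> k}. PiE S (\<lambda>_. {..<n}))"

lemma card_subsets_card_le:
  assumes "finite A"
  shows "card {S. S \<subseteq> A \<and> card S \<le> k} \<le> (k + 1) * (card A + 1) ^ k"
proof -
  have "{S. S \<subseteq> A \<and> card S \<le> k} = (\<Union>j\<in>{..k}. {S. S \<subseteq> A \<and> card S = j})"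
    by auto
  then have "card {S. S \<subseteq> A \<and> card S \<le> k} \<le> (\<Sum>j\<le>k. card A choose j)"
    using card_UN_le[of "{..k}" "\<lambda>j. {S. S \<subseteq> A \<and> card S = j}"] by (simp add: n_subsets assms)
  also have "\<dots> \<le> (\<Sum>j\<le>k. (card A + 1) ^ k)"
  proof (intro sum_mono)
    fix j assume "j \<in> {..k}"
    have "card A choose j \<le> card A ^ j"
      by (cases "j \<le> card A") (auto simp: binomial_le_pow binomial_eq_0)
    also have "\<dots> \<le> (card A + 1) ^ j"
      by (intro power_mono) auto
    also have "\<dots> \<le> (card A + 1) ^ k"
      using \<open>j \<in> {..k}\<close> by (intro power_increasing) auto
    finally show "card A choose j \<le> (card A + 1) ^ k" .
  qed
  finally show ?thesis
    by simp
qed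

lemma finite_shift_patterns: "finite A \<Longrightarrow> finite (shift_patterns A k n)"
  unfolding shift_patterns_def by (intro finite_SigmaI finite_PiE) (auto intro: finite_subset)

lemma card_shift_patterns_le:
  assumes "finite A" "1 \<le> n"
  shows "card (shift_patterns A k n) \<le> (k + 1) * (card A + 1) ^ k * n ^ k"
proof -
  have "card (shift_patterns A k n) = (\<Sum>S | S \<subseteq> A \<and> card S \<le> k. n ^ card S)"
    using assms(1) unfolding shift_patterns_def
    by (subst card_SigmaI) (auto simp: card_PiE intro!: finite_PiE sum.cong dest: finite_subset)
  also have "\<dots> \<le> (\<Sum>S | S \<subseteq> A \<and> card S \<le> k. n ^ k)"
    using assms(2) by (intro sum_mono power_increasing) auto
  also have "\<dots> \<le> (k + 1) * (card A + 1) ^ k * n ^ k"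
    using card_subsets_card_le[OF assms(1), of k] by simp
  finally show ?thesis .
qed

(* An event (t, d, S, s) with d = 0 is an identification event with at most M interferers,
   one with d > 0 a synchronization event with at most M - 1; shifts are restricted to S so
   that there are finitely many events. *)
definition code_events :: "nat \<Rightarrow> nat \<Rightarrow> nat \<Rightarrow> (nat \<times> nat \<times> nat set \<times> (nat \<Rightarrow> nat)) set" where
  "code_events T M n =
    (SIGMA t:{1..T}. SIGMA d:{..<n}. shift_patterns ({1..T} - {t}) (if d = 0 then M else M - 1) n)"

lemma card_code_events_le:
  assumes "1 \<le> n"
  shows "card (code_events T M n) \<le> (M + 1) * T ^ (M + 1) * n ^ (M + 1)"
proof -
  have bound: "card (shift_patterns ({1..T} - {t}) k n) \<le> (M + 1) * T ^ M * n ^ M"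
    if "t \<in> {1..T}" "k \<le> M" for t k
  proof -
    have "card (shift_patterns ({1..T} - {t}) k n) \<le> card (shift_patterns ({1..T} - {t}) M n)"
      using that by (intro card_mono finite_shift_patterns) (auto simp: shift_patterns_def)
    also have "\<dots> \<le> (M + 1) * (card ({1..T} - {t}) + 1) ^ M * n ^ M"
      using assms by (intro card_shift_patterns_le) auto
    also have "card ({1..T} - {t}) + 1 = T"
      using that by simp
    finally show ?thesis .
  qed
  have "card (code_events T M n) =
      (\<Sum>t\<in>{1..T}. \<Sum>d<n. card (shift_patterns ({1..T} - {t}) (if d = 0 then M else M - 1) n))"
    unfolding code_events_def by (simp add: card_SigmaI finite_shift_patterns)
  also have "\<dots> \<le> (\<Sum>t\<in>{1..T}. \<Sum>d<n. (M + 1) * T ^ M * n ^ M)"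
    using bound by (intro sum_mono) auto
  also have "\<dots> = (M + 1) * T ^ (M + 1) * n ^ (M + 1)"
    by (simp add: algebra_simps)
  finally show ?thesis .
qed

definition async_code :: "nat \<Rightarrow> nat \<Rightarrow> nat \<Rightarrow> (nat \<Rightarrow> nat \<Rightarrow> bool) \<Rightarrow> bool" where
  "async_code T M n c \<longleftrightarrow>
     (\<forall>t\<in>{1..T}. \<forall>S \<subseteq> {1..T} - {t}. card S \<le> M \<longrightarrow>
        (\<forall>s :: nat \<Rightarrow> nat. (\<forall>u\<in>S. s u < n) \<longrightarrow>
           \<not> covers n (bigor S (\<lambda>u. shiftv (s u) (c u))) (c t))) \<and>
     (\<forall>t\<in>{1..T}. \<forall>d\<in>{1..n-1}. \<forall>S \<subseteq> {1..T} - {t}. card S \<le> M - 1 \<longrightarrow>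
        (\<forall>s :: nat \<Rightarrow> nat. (\<forall>u\<in>S. s u < n) \<longrightarrow>
           \<not> covers n (orv (shiftv d (c t)) (bigor S (\<lambda>u. shiftv (s u) (c u)))) (c t)))"

lemma async_code_if_events_avoided:
  assumes "1 \<le> n" and "\<forall>(t, d, S, s)\<in>code_events T M n. \<not> covered_upto t S s d n c"
  shows "async_code T M n (\<lambda>u i. c (u, i))"
  unfolding async_code_def
proof (intro conjI ballI allI impI)
  fix t S s
  assume "t \<in> {1..T}" "S \<subseteq> {1..T} - {t}" "card S \<le> M" "\<forall>u\<in>S. s u < n"
  with assms(1) have "(t, 0, S, restrict s S) \<in> code_events T M n"
    by (auto simp: code_events_def shift_patterns_def)
  then show "\<not> covers n (bigor S (\<lambda>u. shiftv (s u) (\<lambda>i. c (u, i)))) (\<lambda>i. c (t, i))"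
    using assms by (auto simp: covers_iff_covered_upto covered_upto_restrict)
next
  fix t d S s
  assume "t \<in> {1..T}" "d \<in> {1..n-1}" "S \<subseteq> {1..T} - {t}" "card S \<le> M - 1" "\<forall>u\<in>S. s u < n"
  then have "(t, d, S, restrict s S) \<in> code_events T M n" "0 < d"
    by (auto simp: code_events_def shift_patterns_def)
  then show "\<not> covers n (orv (shiftv d (\<lambda>i. c (t, i))) (bigor S (\<lambda>u. shiftv (s u) (\<lambda>i. c (u, i)))))
      (\<lambda>i. c (t, i))"
    using assms by (auto simp: covers_shift_iff_covered_upto covered_upto_restrict)
qed

lemma exists_async_code:
  fixes M n T :: nat
  assumes "1 \<le> M" "1 \<le> n"
    and small: "(real M + 1) * real T ^ (M + 1) * real n ^ (M + 1) *
      (1 - 1 / (real M + 1) * (1 - 1 / (real M + 1)) ^ M) ^ n < 1"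
  shows "\<exists>c. async_code T M n c"
proof -
  have "\<exists>c. \<forall>e\<in>code_events T M n. \<not> (\<lambda>(t, d, S, s). covered_upto t S s d n) e c"
  proof (rule bernoulli_expect_exists_avoiding)
    show "finite ({1..T} \<times> {1..n})" "finite (code_events T M n)"
      by (auto simp: code_events_def finite_shift_patterns)
    fix e assume "e \<in> code_events T M n"
    then obtain t d S s where e: "e = (t, d, S, s)" and "t \<in> {1..T}" "S \<subseteq> {1..T} - {t}"
      "card S \<le> (if d = 0 then M else M - 1)"
      by (auto simp: code_events_def shift_patterns_def)
    then show "bernoulli_expect (1 / (real M + 1)) ({1..T} \<times> {1..n})
        (\<lambda>c. if (\<lambda>(t, d, S, s). covered_upto t S s d n) e c then 1 else 0)
      \<le> (1 - 1 / (real M + 1) * (1 - 1 / (real M + 1)) ^ M) ^ n"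
      unfolding e prod.case
      by (intro covered_upto_probability_le) (use assms(1) in \<open>auto dest: finite_subset\<close>)
  next
    have "1 / (real M + 1) * (1 - 1 / (real M + 1)) ^ M \<le> 1"
      by (intro mult_le_one power_le_one) (auto simp: field_simps)
    then have "0 \<le> (1 - 1 / (real M + 1) * (1 - 1 / (real M + 1)) ^ M) ^ n"
      by simp
    moreover have "real (card (code_events T M n)) \<le> (real M + 1) * real T ^ (M + 1) * real n ^ (M + 1)"
    proof -
      have "real (card (code_events T M n)) \<le> real ((M + 1) * T ^ (M + 1) * n ^ (M + 1))"
        using card_code_events_le[OF assms(2)] by (simp only: of_nat_le_iff)
      then show ?thesis
        by (simp add: algebra_simps)
    qed
    ultimately show "real (card (code_events T M n)) *
        (1 - 1 / (real M + 1) * (1 - 1 / (real M + 1)) ^ M) ^ n < 1"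
      using small by (meson le_less_trans mult_right_mono)
  qed (auto simp: field_simps)
  then show ?thesis
    using async_code_if_events_avoided[OF assms(2)] by blast
qed

section \<open>Asymptotics\<close>

lemma isolation_prob_ge:
  assumes "1 \<le> M"
  shows "1 / (exp 1 * (real M + 1)) \<le> 1 / (real M + 1) * (1 - 1 / (real M + 1)) ^ M"
proof -
  have M: "0 < real M"
    using assms by simp
  have "(1 + 1 / real M) ^ M \<le> exp 1"
    using exp_ge_one_plus_x_over_n_power_n[of M 1] assms by simp
  moreover have "0 < 1 + 1 / real M"
    using M by (simp add: add_pos_pos)
  ultimately have "1 / exp 1 \<le> 1 / (1 + 1 / real M) ^ M"
    by (intro divide_left_mono mult_pos_pos zero_less_power) auto
  also have "1 / (1 + 1 / real M) ^ M = (1 - 1 / (real M + 1)) ^ M"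
    using M by (simp add: field_simps)
  finally have "1 / exp 1 \<le> (1 - 1 / (real M + 1)) ^ M" .
  then have "1 / exp 1 / (real M + 1) \<le> (1 - 1 / (real M + 1)) ^ M / (real M + 1)"
    by (rule divide_right_mono) simp
  then show ?thesis
    by (simp add: divide_divide_eq_left)
qed

lemma one_minus_power_le_powr:
  fixes x a T :: real
  assumes "0 \<le> x" "x \<le> 1" "0 < T" "a * ln T \<le> x * real n"
  shows "(1 - x) ^ n \<le> T powr (- a)"
proof -
  have "(1 - x) ^ n \<le> exp (- x) ^ n"
    using assms(1,2) by (intro power_mono) (auto simp: exp_ge_add_one_self[of "-x", simplified])
  also have "\<dots> = exp (- (x * real n))"
    by (simp add: exp_of_nat_mult[symmetric] mult.commute)
  also have "\<dots> \<le> exp (- (a * ln T))"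
    using assms(4) by simp
  also have "\<dots> = T powr (- a)"
    using assms(3) by (simp add: powr_def)
  finally show ?thesis .
qed

lemma union_bound_lt_1:
  fixes M T n :: nat and \<delta> :: real
  assumes "1 \<le> M" "0 < \<delta>" "2 \<le> T"
    and n_ge: "(1 + \<delta>) * exp 1 * (real M + 1) ^ 2 * ln T \<le> real n"
    and n_le: "real n \<le> real T powr \<delta> / (real M + 1)"
  shows "(real M + 1) * real T ^ (M + 1) * real n ^ (M + 1) *
    (1 - 1 / (real M + 1) * (1 - 1 / (real M + 1)) ^ M) ^ n < 1"
proof -
  define K where "K = real M + 1"
  define x where "x = 1 / K * (1 - 1 / K) ^ M"
  have K: "2 \<le> K" and T: "0 < real T"
    using assms by (auto simp: K_def)
  have K_facts: "1 / K \<le> 1" "0 \<le> 1 / K" "0 \<le> 1 - 1 / K" "1 - 1 / K \<le> 1"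
    using K by auto
  have x: "0 \<le> x" "x \<le> 1"
    unfolding x_def by (intro mult_nonneg_nonneg zero_le_power mult_le_one power_le_one; use K_facts in simp)+
  have x_ge: "1 / (exp 1 * K) \<le> x"
    unfolding x_def K_def by (rule isolation_prob_ge[OF assms(1)])
  have "K * (1 + \<delta>) * ln T = 1 / (exp 1 * K) * ((1 + \<delta>) * exp 1 * K ^ 2 * ln T)"
    using K by (simp add: field_simps power2_eq_square)
  also have "\<dots> \<le> x * real n"
    using x x_ge n_ge assms(2,3) K by (intro mult_mono) (auto simp: K_def)
  finally have xn: "K * (1 + \<delta>) * ln T \<le> x * real n" .
  have "(1 - x) ^ n \<le> real T powr (- (K * (1 + \<delta>)))"
    by (rule one_minus_power_le_powr) (use x T xn in auto)
  also have "- (K * (1 + \<delta>)) = real (M + 1) * - (1 + \<delta>)"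
    by (simp add: K_def algebra_simps)
  also have "real T powr (real (M + 1) * - (1 + \<delta>)) = (real T powr (- (1 + \<delta>))) ^ (M + 1)"
    using T by (intro powr_power[symmetric]) simp
  finally have decay: "(1 - x) ^ n \<le> (real T powr (- (1 + \<delta>))) ^ (M + 1)" .
  have "real T * real n * real T powr (- (1 + \<delta>)) = real n * (real T * real T powr (- (1 + \<delta>)))"
    by (simp only: mult_ac)
  also have "real T * real T powr (- (1 + \<delta>)) = real T powr (- \<delta>)"
    using powr_mult_base[of "real T" "- (1 + \<delta>)"] by simp
  also have "real n * real T powr (- \<delta>) \<le> 1 / K"
    using n_le T by (simp add: K_def powr_minus field_simps)
  finally have z: "real T * real n * real T powr (- (1 + \<delta>)) \<le> 1 / K" .
  have "K * real T ^ (M + 1) * real n ^ (M + 1) * (1 - x) ^ n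
      \<le> K * real T ^ (M + 1) * real n ^ (M + 1) * (real T powr (- (1 + \<delta>))) ^ (M + 1)"
    using decay K by (intro mult_left_mono) auto
  also have "\<dots> = K * (real T * real n * real T powr (- (1 + \<delta>))) ^ (M + 1)"
    by (simp add: power_mult_distrib)
  also have "\<dots> \<le> K * (1 / K) ^ (M + 1)"
    using z K by (intro mult_left_mono power_mono) auto
  also have "\<dots> = (1 / K) ^ M"
    using K by (simp add: field_simps)
  also have "\<dots> < 1"
    using K assms(1) by (simp add: power_less_one_iff)
  finally show ?thesis
    by (simp add: K_def x_def)
qed

definition code_length :: "real \<Rightarrow> nat \<Rightarrow> nat \<Rightarrow> nat" where
  "code_length \<delta> M T = nat \<lceil>(1 + \<delta>) * exp 1 * ln 2 * (real M + 1)^2 * log 2 (real T)\<rceil>"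

lemma eventually_union_bound_lt_1:
  fixes M :: nat and \<delta> :: real
  assumes "1 \<le> M" "0 < \<delta>"
  shows "\<forall>\<^sub>F T in sequentially. 1 \<le> code_length \<delta> M T \<and>
    (real M + 1) * real T ^ (M + 1) * real (code_length \<delta> M T) ^ (M + 1) *
      (1 - 1 / (real M + 1) * (1 - 1 / (real M + 1)) ^ M) ^ code_length \<delta> M T < 1"
proof -
  have "\<forall>\<^sub>F T in at_top. (1 + \<delta>) * exp 1 * (real M + 1) ^ 2 * ln T + 1 \<le> T powr \<delta> / (real M + 1)"
    using assms(2) by real_asymp
  then have "\<forall>\<^sub>F T in sequentially. 2 \<le> T \<and>
      (1 + \<delta>) * exp 1 * (real M + 1) ^ 2 * ln (real T) + 1 \<le> real T powr \<delta> / (real M + 1)"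
    using eventually_ge_at_top[of 2]
    by (auto intro: eventually_conj eventually_compose_filterlim[OF _ filterlim_real_sequentially])
  then show ?thesis
  proof (rule eventually_mono, elim conjE)
    fix T :: nat
    assume T: "2 \<le> T" and L: "(1 + \<delta>) * exp 1 * (real M + 1) ^ 2 * ln (real T) + 1 \<le> real T powr \<delta> / (real M + 1)"
    have "code_length \<delta> M T = nat \<lceil>(1 + \<delta>) * exp 1 * (real M + 1) ^ 2 * ln (real T)\<rceil>"
      by (simp add: code_length_def log_def mult_ac)
    moreover have "0 < (1 + \<delta>) * exp 1 * (real M + 1) ^ 2 * ln (real T)"
      using T assms(2) by simp
    ultimately have "(1 + \<delta>) * exp 1 * (real M + 1) ^ 2 * ln (real T) \<le> real (code_length \<delta> M T)"
      "real (code_length \<delta> M T) \<le> real T powr \<delta> / (real M + 1)" "1 \<le> code_length \<delta> M T"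
      using L by linarith+
    then show "1 \<le> code_length \<delta> M T \<and> (real M + 1) * real T ^ (M + 1) * real (code_length \<delta> M T) ^ (M + 1) *
      (1 - 1 / (real M + 1) * (1 - 1 / (real M + 1)) ^ M) ^ code_length \<delta> M T < 1"
      using union_bound_lt_1[OF assms T] by blast
  qed
qed

theorem theorem2:
  fixes M :: nat and \<delta> :: real
  assumes "M \<ge> 1" and "\<delta> > 0"
  shows "\<exists>T0::nat. \<forall>T\<ge>T0.
    (let n = nat \<lceil>(1 + \<delta>) * exp 1 * ln 2 * (real M + 1)^2 * log 2 (real T)\<rceil> in
     \<exists>c :: nat \<Rightarrow> (nat \<Rightarrow> bool).
       (\<forall>t\<in>{1..T}. \<forall>S \<subseteq> {1..T} - {t}. card S \<le> M \<longrightarrow>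
          (\<forall>s :: nat \<Rightarrow> nat. (\<forall>u\<in>S. s u < n) \<longrightarrow>
             \<not> covers n (bigor S (\<lambda>u. shiftv (s u) (c u))) (c t))) \<and>
       (\<forall>t\<in>{1..T}. \<forall>d\<in>{1..n-1}. \<forall>S \<subseteq> {1..T} - {t}. card S \<le> M - 1 \<longrightarrow>
          (\<forall>s :: nat \<Rightarrow> nat. (\<forall>u\<in>S. s u < n) \<longrightarrow>
             \<not> covers n (orv (shiftv d (c t)) (bigor S (\<lambda>u. shiftv (s u) (c u)))) (c t))))"
proof -
  obtain T0 where "\<And>T. T \<ge> T0 \<Longrightarrow> 1 \<le> code_length \<delta> M T \<and>
      (real M + 1) * real T ^ (M + 1) * real (code_length \<delta> M T) ^ (M + 1) *
      (1 - 1 / (real M + 1) * (1 - 1 / (real M + 1)) ^ M) ^ code_length \<delta> M T < 1"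
    using eventually_union_bound_lt_1[OF assms] unfolding eventually_sequentially by blast
  then have "\<exists>c. async_code T M (code_length \<delta> M T) c" if "T \<ge> T0" for T
    using exists_async_code[OF assms(1)] that by blast
  then show ?thesis
    unfolding async_code_def code_length_def Let_def by blast
qed

end
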